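(* BCP does not hold on $\mathbb H$ for the box-distance $d_\infty(p,q)=\|p^{-1}\cdot q\|_\infty$, where $\|(x,y,z)\|_\infty=\max\big((x^2+y^2)^{1/2},\,2|z|^{1/2}\big)$.
   Context: $\mathbb H=\mathbb R^3$ with group law $(x,y,z)\cdot(x',y',z')=(x+x',y+y',z+z'+\tfrac12(xy'-yx'))$; $d_\infty$ is a homogeneous (left invariant, dilation-homogeneous, topology-inducing) distance. BCP holds for $d$ if there is $N\geq1$ such that for every bounded $A$ and every family $\mathcal B$ of closed balls with each point of $A$ the center of some ball of $\mathcal B$, some subfamily $\mathcal F\subset\mathcal B$ satisfies $\chi_A\le\sum_{B\in\mathcal F}\chi_B\le N$. *)

theory Defs
  imports "HOL-Analysis.Analysis"
begin

type_synonym heis = "real \<times> real \<times> real"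

definition hmult :: "heis \<Rightarrow> heis \<Rightarrow> heis" where
  "hmult p q = (case p of (x, y, z) \<Rightarrow> case q of (x', y', z') \<Rightarrow>
     (x + x', y + y', z + z' + (1/2) * (x * y' - y * x')))"

definition hinv :: "heis \<Rightarrow> heis" where
  "hinv p = (case p of (x, y, z) \<Rightarrow> (-x, -y, -z))"

definition box_norm :: "heis \<Rightarrow> real" where
  "box_norm p = (case p of (x, y, z) \<Rightarrow> max (sqrt (x^2 + y^2)) (2 * sqrt \<bar>z\<bar>))"

definition d_inf :: "heis \<Rightarrow> heis \<Rightarrow> real" where
  "d_inf p q = box_norm (hmult (hinv p) q)"

definition cball_d :: "('a \<Rightarrow> 'a \<Rightarrow> real) \<Rightarrow> 'a \<Rightarrow> real \<Rightarrow> 'a set" where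
  "cball_d d c r = {q. d c q \<le> r}"

definition bounded_d :: "('a \<Rightarrow> 'a \<Rightarrow> real) \<Rightarrow> 'a set \<Rightarrow> bool" where
  "bounded_d d A \<longleftrightarrow> (\<exists>c R. \<forall>a\<in>A. d c a \<le> R)"

text \<open>Besicovitch covering property. The sum of characteristic functions
  of the balls in F at p is the number of balls of F containing p.\<close>
definition BCP :: "('a \<Rightarrow> 'a \<Rightarrow> real) \<Rightarrow> bool" where
  "BCP d \<longleftrightarrow> (\<exists>N::nat. N \<ge> 1 \<and>
     (\<forall>A \<B>. bounded_d d A
        \<longrightarrow> (\<forall>B\<in>\<B>. \<exists>c r. r > 0 \<and> B = cball_d d c r)
        \<longrightarrow> (\<forall>a\<in>A. \<exists>B\<in>\<B>. \<exists>r>0. B = cball_d d a r)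
        \<longrightarrow> (\<exists>F\<subseteq>\<B>. \<forall>p.
              (p \<in> A \<longrightarrow> (\<exists>B\<in>F. p \<in> B)) \<and>
              finite {B\<in>F. p \<in> B} \<and> card {B\<in>F. p \<in> B} \<le> N)))"

end

theory Submission
  imports Defs
begin

(* BCP fails for a distance d as soon as there is a bounded
   sequence of points p n with radii r n > 0 such that
     (a) p m lies in the closed ball B n = cball_d d (p n) (r n) only for m = n, and
     (b) one fixed point lies in every ball B n.
   Indeed, a subfamily covering the centres must then contain every B n, so the
   common point is covered infinitely often (lemma not_BCP_if_isolated_balls).
   For d_inf we take p n = (lam n, lam n * slope n, lam n ^ 2) with the super-
   exponentially small scale lam n = (1/2)^((n+2)^2) and slopes
   slope n = 1 - (1/2)^n in [0,1], and r n = 2 * lam n = box_norm (p n), so the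
   origin is on the boundary of every ball.  The separation (a) comes from the
   vertical coordinate of (p n)^-1 * p m: for m > n the twist term
   lam n * lam m * (slope m - slope n) / 2 dominates lam m ^ 2, for m < n the
   term lam m ^ 2 dominates; in both cases it exceeds lam n ^ 2 in absolute value. *)

lemma not_BCP_if_isolated_balls:
  fixes d :: "'a \<Rightarrow> 'a \<Rightarrow> real" and p :: "nat \<Rightarrow> 'a" and r :: "nat \<Rightarrow> real"
  assumes bounded: "bounded_d d (range p)"
    and radius_pos: "\<And>n. r n > 0"
    and isolated: "\<And>n m. d (p n) (p m) \<le> r n \<longleftrightarrow> n = m"
    and common: "\<And>n. d (p n) c0 \<le> r n"
  shows "\<not> BCP d"
proof
  assume "BCP d"
  define ball where "ball n = cball_d d (p n) (r n)" for n
  have mem: "p m \<in> ball n \<longleftrightarrow> n = m" for n m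
    using isolated by (simp add: ball_def cball_d_def)
  have balls: "\<forall>B\<in>range ball. \<exists>c r. r > 0 \<and> B = cball_d d c r"
    using radius_pos by (auto simp: ball_def)
  have centred: "\<forall>a\<in>range p. \<exists>B\<in>range ball. \<exists>r>0. B = cball_d d a r"
    using radius_pos by (auto simp: ball_def)
  obtain N where "\<forall>A \<B>. bounded_d d A
        \<longrightarrow> (\<forall>B\<in>\<B>. \<exists>c r. r > 0 \<and> B = cball_d d c r)
        \<longrightarrow> (\<forall>a\<in>A. \<exists>B\<in>\<B>. \<exists>r>0. B = cball_d d a r)
        \<longrightarrow> (\<exists>F\<subseteq>\<B>. \<forall>q. (q \<in> A \<longrightarrow> (\<exists>B\<in>F. q \<in> B)) \<and>
              finite {B\<in>F. q \<in> B} \<and> card {B\<in>F. q \<in> B} \<le> N)"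
    using \<open>BCP d\<close> unfolding BCP_def by (elim exE conjE) (rule that)
  from this[rule_format, OF bounded balls[rule_format] centred[rule_format]]
  obtain F where F: "F \<subseteq> range ball"
    and covers: "\<And>q. q \<in> range p \<Longrightarrow> \<exists>B\<in>F. q \<in> B"
    and finite_overlap: "\<And>q. finite {B\<in>F. q \<in> B}"
    by auto
  text \<open>The only ball of the family containing p n is ball n, so F contains all balls.\<close>
  have all_in_F: "ball n \<in> F" for n
  proof -
    obtain B where "B \<in> F" "p n \<in> B" using covers[of "p n"] by blast
    moreover from \<open>B \<in> F\<close> F obtain k where "B = ball k" by blast
    ultimately show ?thesis using mem[of n k] by simp
  qed
  have "range ball \<subseteq> {B\<in>F. c0 \<in> B}"
    using all_in_F common by (auto simp: ball_def cball_d_def)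
  hence "finite (range ball)" using finite_overlap[of c0] by (rule finite_subset)
  moreover have "inj ball"
  proof (rule injI)
    fix n m assume "ball n = ball m"
    have "p n \<in> ball n" by (simp add: mem)
    hence "p n \<in> ball m" by (simp only: \<open>ball n = ball m\<close>)
    thus "n = m" by (simp add: mem)
  qed
  ultimately show False using finite_imageD[of ball UNIV] by simp
qed

lemma box_norm_origin: "box_norm (0, 0, 0) = 0"
  by (simp add: box_norm_def)

lemma box_norm_hinv: "box_norm (hinv q) = box_norm q"
  by (simp add: box_norm_def hinv_def split: prod.splits)

lemma d_inf_self: "d_inf q q = 0"
  by (simp add: d_inf_def hmult_def hinv_def box_norm_origin split: prod.splits)

lemma d_inf_to_origin: "d_inf q (0, 0, 0) = box_norm q"
proof -
  have "hmult (hinv q) (0, 0, 0) = hinv q"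
    by (simp add: hmult_def hinv_def split: prod.splits)
  thus ?thesis by (simp add: d_inf_def box_norm_hinv)
qed

lemma d_inf_from_origin: "d_inf (0, 0, 0) q = box_norm q"
  by (simp add: d_inf_def hmult_def hinv_def split: prod.splits)

lemma d_inf_ge_vertical:
  "2 * sqrt \<bar>c' - c - (a * b' - b * a') / 2\<bar> \<le> d_inf (a, b, c) (a', b', c')"
proof -
  have "hmult (hinv (a, b, c)) (a', b', c') =
        (a' - a, b' - b, c' - c - (a * b' - b * a') / 2)"
    by (simp add: hmult_def hinv_def field_simps)
  thus ?thesis by (simp add: d_inf_def box_norm_def)
qed

definition lam :: "nat \<Rightarrow> real" where "lam n = (1/2) ^ ((n + 2)^2)"
definition slope :: "nat \<Rightarrow> real" where "slope n = 1 - (1/2) ^ n"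
definition pt :: "nat \<Rightarrow> heis" where "pt n = (lam n, lam n * slope n, (lam n)^2)"

lemma lam_pos: "lam n > 0"
  by (simp add: lam_def)

lemma lam_le_one: "lam n \<le> 1"
  by (simp add: lam_def power_le_one)

lemma slope_bounds: "0 \<le> slope n" "slope n \<le> 1"
  by (auto simp: slope_def power_le_one)

lemma slope_mono: "n \<le> m \<Longrightarrow> slope n \<le> slope m"
  by (simp add: slope_def power_decreasing)

lemma slope_gap: "n < m \<Longrightarrow> (1/2) ^ (n + 1) \<le> slope m - slope n"
proof -
  assume "n < m"
  hence "(1/2 :: real) ^ m \<le> (1/2) ^ (n + 1)" by (intro power_decreasing) auto
  thus ?thesis by (simp add: slope_def)
qed

lemma exponent_gap:
  assumes "n < m" shows "(n + 2)^2 + (n + 2) < (m + 2 :: nat)^2"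
proof -
  have "(n + 3)^2 \<le> (m + 2 :: nat)^2" using assms by (simp add: power_mono)
  moreover have "(n + 2)^2 + (n + 2) < (n + 3 :: nat)^2"
    by (simp add: power2_eq_square algebra_simps)
  ultimately show ?thesis by linarith
qed

lemma lam_decay: "n < m \<Longrightarrow> 2 * lam m \<le> lam n"
proof -
  assume "n < m"
  hence "(n + 2)^2 + 1 \<le> (m + 2)^2" using exponent_gap by fastforce
  hence "(1/2 :: real) ^ ((m + 2)^2) \<le> (1/2) ^ ((n + 2)^2 + 1)"
    by (intro power_decreasing) auto
  thus ?thesis by (simp add: lam_def)
qed

lemma lam_below_twist: "n < m \<Longrightarrow> lam m < lam n * (slope m - slope n) / 2"
proof -
  assume nm: "n < m"
  have "lam m < (1/2) ^ ((n + 2)^2 + (n + 2))"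
    unfolding lam_def using exponent_gap[OF nm] by (intro power_strict_decreasing) auto
  also have "\<dots> = lam n * (1/2) ^ (n + 1) / 2" by (simp add: lam_def power_add)
  also have "\<dots> \<le> lam n * (slope m - slope n) / 2"
    using slope_gap[OF nm] lam_pos[of n] by (intro divide_right_mono mult_left_mono) auto
  finally show ?thesis .
qed

text \<open>The point pt n lies on the boundary of the ball of radius 2 lam n about the origin:
  the vertical part 2 sqrt(lam n^2) dominates the horizontal part.\<close>
lemma box_norm_pt: "box_norm (pt n) = 2 * lam n"
proof -
  have "(lam n * slope n)^2 \<le> (lam n)^2"
    using slope_bounds[of n] lam_pos[of n]
    by (simp add: power_mult_distrib mult_left_le power_le_one)
  hence "(lam n)^2 + (lam n * slope n)^2 \<le> 4 * (lam n)^2"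
    using zero_le_power2[of "lam n"] by linarith
  hence "(lam n)^2 + (lam n * slope n)^2 \<le> (2 * lam n)^2" by simp
  hence "sqrt ((lam n)^2 + (lam n * slope n)^2) \<le> sqrt ((2 * lam n)^2)"
    by (rule real_sqrt_le_mono)
  also have "\<dots> = 2 * lam n" using lam_pos[of n] by (simp only: real_sqrt_abs)
  finally have "sqrt ((lam n)^2 + (lam n * slope n)^2) \<le> 2 * lam n" .
  thus ?thesis using lam_pos[of n] by (simp add: box_norm_def pt_def max_def)
qed

lemma vertical_gap:
  assumes "n \<noteq> m"
  shows "(lam n)^2 < \<bar>(lam m)^2 - (lam n)^2 - lam n * lam m * (slope m - slope n) / 2\<bar>"
    (is "_ < abs ?Z")
proof (cases "n < m")
  case True
  have "lam m * lam m < lam m * (lam n * (slope m - slope n) / 2)"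
    using lam_below_twist[OF True] lam_pos[of m] by simp
  hence "?Z + (lam n)^2 < 0" by (simp add: power2_eq_square algebra_simps)
  thus ?thesis by linarith
next
  case False
  hence mn: "m < n" using assms by simp
  have "(2 * lam n)^2 \<le> (lam m)^2"
    using lam_decay[OF mn] lam_pos[of n] by (intro power_mono) auto
  hence "4 * (lam n)^2 \<le> (lam m)^2" by simp
  moreover have "lam n * lam m * (slope m - slope n) \<le> 0"
    using slope_mono[of m n] mn lam_pos[of n] lam_pos[of m]
    by (simp add: mult_nonneg_nonpos)
  moreover have "0 < (lam n)^2" using lam_pos[of n] by simp
  ultimately have "(lam n)^2 < ?Z" by linarith
  thus ?thesis by linarith
qed

lemma pt_separated: "n \<noteq> m \<Longrightarrow> 2 * lam n < d_inf (pt n) (pt m)"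
proof -
  assume "n \<noteq> m"
  have "lam n < sqrt \<bar>(lam m)^2 - (lam n)^2 - lam n * lam m * (slope m - slope n) / 2\<bar>"
    by (rule real_less_rsqrt[OF vertical_gap[OF \<open>n \<noteq> m\<close>]])
  also have "\<dots> = sqrt \<bar>(lam m)^2 - (lam n)^2
      - (lam n * (lam m * slope m) - lam n * slope n * lam m) / 2\<bar>"
    by (simp add: algebra_simps)
  also have "\<dots> \<le> d_inf (pt n) (pt m) / 2"
    using d_inf_ge_vertical[where a = "lam n" and b = "lam n * slope n" and c = "(lam n)^2"
        and a' = "lam m" and b' = "lam m * slope m" and c' = "(lam m)^2"] by (simp add: pt_def)
  finally show ?thesis by simp
qed

theorem mainTheorem5:
  shows "\<not> BCP d_inf"
proof (rule not_BCP_if_isolated_balls)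
  show "bounded_d d_inf (range pt)"
  proof -
    have "d_inf (0, 0, 0) (pt n) \<le> 2" for n
      using lam_le_one[of n] by (simp add: d_inf_from_origin box_norm_pt)
    thus ?thesis unfolding bounded_d_def by blast
  qed
  show "2 * lam n > 0" for n
    using lam_pos[of n] by simp
  show "d_inf (pt n) (pt m) \<le> 2 * lam n \<longleftrightarrow> n = m" for n m
    using pt_separated[of n m] d_inf_self[of "pt n"] lam_pos[of n] by (cases "n = m") auto
  show "d_inf (pt n) (0, 0, 0) \<le> 2 * lam n" for n
    by (simp add: d_inf_to_origin box_norm_pt)
qed

end
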